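(* Fix $0<\epsilon<1/(4L)$ where $L=33$. Let $A\in\mathbb{R}^{m\times n}$ satisfy the RRCP with respect to $G$ with constant $\epsilon$ and each $W_i\in\mathbb{R}^{n_i\times n_{i-1}}$ satisfy the WDC with constant $\epsilon$. Then for all $x,y\in\mathbb{R}^k\setminus\{0\}$, the angle $\theta_1:=\angle(A_{G(x)}G(x),A_{G(y)}G(y))$ is well-defined and $|\cos\theta_1-\cos\varphi(\theta_d)|\leqslant4L\epsilon$, where $\theta_d=\angle(G(x),G(y))$ and $\varphi(\theta):=\cos^{-1}\!\big(\frac{(\pi-2\theta)\cos\theta+2\sin\theta}{\pi}\big)$.
   Context: Network: $k=n_0<\dots<n_d=n$, $G(x)=\mathrm{relu}(W_d\cdots\mathrm{relu}(W_1x)\cdots)$. $W_{+,x}:=\mathrm{diag}(Wx>0)W$. $\theta_{x,y}=\angle(x,y)$, $\hat x=x/\|x\|$, $M_{\hat x\leftrightarrow\hat y}$ the symmetric matrix swapping $\hat x,\hat y$ and vanishing on $\mathrm{span}(x,y)^\perp$ ($\pm\hat x\hat x^\top$ in degenerate cases). WDC with constant $\epsilon$: $\|W_{+,x}^\top W_{+,y}-(\frac{\pi-\theta_{x,y}}{2\pi}I+\frac{\sin\theta_{x,y}}{2\pi}M_{\hat x\leftrightarrow\hat y})\|\leqslant\epsilon$ for all nonzero $x,y$. $A_z:=\mathrm{diag}(\mathrm{sgn}(Az))A$ ($\mathrm{sgn}(0)=0$); $\Phi_{z,w}=\frac{\pi-2\theta_{z,w}}{\pi}I_n+\frac{2\sin\theta_{z,w}}{\pi}M_{\hat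 z\leftrightarrow\hat w}$ for $z,w\neq0$, else $0$. RRCP with constant $\epsilon$: $|\langle(A_{G(x)}^\top A_{G(y)}-\Phi_{G(x),G(y)})(G(x_1)-G(x_2)),G(x_3)-G(x_4)\rangle|\leqslant L\epsilon\|G(x_1)-G(x_2)\|\|G(x_3)-G(x_4)\|$ for all $x,y,x_1,\dots,x_4$, $L=33$. *)

theory Defs
  imports Complex_Main "Jordan_Normal_Form.Matrix"
begin

definition vnorm :: "real vec \<Rightarrow> real" where
  "vnorm v = sqrt (v \<bullet> v)"

definition unitv :: "real vec \<Rightarrow> real vec" where
  "unitv v = (1 / vnorm v) \<cdot>\<^sub>v v"

definition vangle :: "real vec \<Rightarrow> real vec \<Rightarrow> real" where
  "vangle u v = arccos ((u \<bullet> v) / (vnorm u * vnorm v))"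

definition outer :: "real vec \<Rightarrow> real vec \<Rightarrow> real mat" where
  "outer u v = mat (dim_vec u) (dim_vec v) (\<lambda>(i,j). u $ i * v $ j)"

definition opnorm :: "real mat \<Rightarrow> real" where
  "opnorm M = Sup {vnorm (M *\<^sub>v v) | v. v \<in> carrier_vec (dim_col M) \<and> vnorm v \<le> 1}"

definition relu :: "real vec \<Rightarrow> real vec" where
  "relu v = vec (dim_vec v) (\<lambda>i. max (v $ i) 0)"

text \<open>G(x) = relu(W_d ... relu(W_1 x)...), the list is [W_1, ..., W_d]\<close>
definition net :: "real mat list \<Rightarrow> real vec \<Rightarrow> real vec" where
  "net Ws x = foldl (\<lambda>v W. relu (W *\<^sub>v v)) x Ws"

definition Wplus :: "real mat \<Rightarrow> real vec \<Rightarrow> real mat" where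
  "Wplus W x = mat (dim_row W) (dim_col W)
     (\<lambda>(i,j). if (W *\<^sub>v x) $ i > 0 then W $$ (i,j) else 0)"

text \<open>A_z = diag(sgn(Az)) A, with sgn 0 = 0\<close>
definition Asgn :: "real mat \<Rightarrow> real vec \<Rightarrow> real mat" where
  "Asgn A z = mat (dim_row A) (dim_col A) (\<lambda>(i,j). sgn ((A *\<^sub>v z) $ i) * A $$ (i,j))"

text \<open>M_{x^ <-> y^}: the symmetric matrix with M x^ = y^, M y^ = x^, vanishing on
  span(x,y)^perp.\<close>
definition Mswap :: "real vec \<Rightarrow> real vec \<Rightarrow> real mat" where
  "Mswap x y = (let a = unitv x; b = unitv y; c = a \<bullet> b in
     if a = b then outer a a
     else if a = - b then - outer a a
     else (1 / (1 - c\<^sup>2)) \<cdot>\<^sub>m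
            ((outer a b + outer b a) - c \<cdot>\<^sub>m (outer a a + outer b b)))"

definition WDC :: "real mat \<Rightarrow> real \<Rightarrow> bool" where
  "WDC W eps \<longleftrightarrow>
     (\<forall>x y. x \<in> carrier_vec (dim_col W) \<and> y \<in> carrier_vec (dim_col W) \<and>
            x \<noteq> 0\<^sub>v (dim_col W) \<and> y \<noteq> 0\<^sub>v (dim_col W) \<longrightarrow>
        (let \<theta> = vangle x y in
          opnorm ((Wplus W x)\<^sup>T * Wplus W y -
                  ((pi - \<theta>) / (2 * pi) \<cdot>\<^sub>m 1\<^sub>m (dim_col W)
                   + (sin \<theta> / (2 * pi)) \<cdot>\<^sub>m Mswap x y)) \<le> eps))"

definition Phi :: "nat \<Rightarrow> real vec \<Rightarrow> real vec \<Rightarrow> real mat" where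
  "Phi n z w = (if z \<noteq> 0\<^sub>v n \<and> w \<noteq> 0\<^sub>v n then
      (let \<theta> = vangle z w in
        ((pi - 2 * \<theta>) / pi) \<cdot>\<^sub>m 1\<^sub>m n + (2 * sin \<theta> / pi) \<cdot>\<^sub>m Mswap z w)
     else 0\<^sub>m n n)"

definition LL :: real where "LL = 33"

definition RRCP :: "real mat \<Rightarrow> real mat list \<Rightarrow> nat \<Rightarrow> nat \<Rightarrow> real \<Rightarrow> bool" where
  "RRCP A Ws k n eps \<longleftrightarrow>
     (\<forall>x y x1 x2 x3 x4.
        x \<in> carrier_vec k \<and> y \<in> carrier_vec k \<and> x1 \<in> carrier_vec k \<and>
        x2 \<in> carrier_vec k \<and> x3 \<in> carrier_vec k \<and> x4 \<in> carrier_vec k \<longrightarrow>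
        \<bar>((((Asgn A (net Ws x))\<^sup>T * Asgn A (net Ws y) - Phi n (net Ws x) (net Ws y))
            *\<^sub>v (net Ws x1 - net Ws x2)) \<bullet> (net Ws x3 - net Ws x4))\<bar>
        \<le> LL * eps * vnorm (net Ws x1 - net Ws x2) * vnorm (net Ws x3 - net Ws x4))"

definition phi :: "real \<Rightarrow> real" where
  "phi \<theta> = arccos (((pi - 2 * \<theta>) * cos \<theta> + 2 * sin \<theta>) / pi)"

end

theory Submission
  imports Defs "HOL-Analysis.Convex"
begin

text \<open>
  A layer never annihilates a nonzero input: if relu (W x) = 0 then W_{+,x} = 0, and the WDC
  at the pair (x, x) would claim that the norm of -I/2 is at most eps < 1/2. So G(x), G(y) are
  nonzero, while G(0) = 0.

  Since G(0) = 0, the RRCP with x1 = y, x3 = x and x2 = x4 = 0 says that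
  <A_{G(x)} G(x), A_{G(y)} G(y)> is within L eps |G(x)| |G(y)| of <Phi G(y), G(x)>, and the
  latter equals |G(x)| |G(y)| cos phi(theta_d) because M swaps the unit vectors of G(x) and
  G(y). For x = y this shows that squared norms are distorted by a factor within 1 +- L eps, and
  dividing out the norms moves the cosine by at most 2 L eps / (1 - L eps) <= 4 L eps.
\<close>

(* HOL-Analysis is imported only for Cauchy_Schwarz_ineq_sum; its inner-product notation
   would clash with the scalar product of Jordan_Normal_Form. *)
unbundle no inner_syntax

section \<open>Scalar products, norms and angles\<close>

lemma scalar_prod_self_nonneg: "0 \<le> (v :: real vec) \<bullet> v"
  unfolding scalar_prod_def by (intro sum_nonneg) auto

lemma scalar_prod_self_eq_0_iff:
  assumes "(v :: real vec) \<in> carrier_vec n"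
  shows "v \<bullet> v = 0 \<longleftrightarrow> v = 0\<^sub>v n"
proof
  assume "v \<bullet> v = 0"
  hence "(\<Sum>i\<in>{0..<n}. v $ i * v $ i) = 0"
    using assms by (simp add: scalar_prod_def)
  hence "\<forall>i\<in>{0..<n}. v $ i * v $ i = 0"
    by (subst (asm) sum_nonneg_eq_0_iff) auto
  thus "v = 0\<^sub>v n" using assms by (intro eq_vecI) simp_all
qed (use assms in simp)

lemma scalar_prod_self_pos:
  assumes "(v :: real vec) \<in> carrier_vec n" "v \<noteq> 0\<^sub>v n"
  shows "0 < v \<bullet> v"
  using scalar_prod_self_nonneg[of v] scalar_prod_self_eq_0_iff[OF assms(1)] assms(2) by linarith

lemma vnorm_nonneg: "0 \<le> vnorm v"
  unfolding vnorm_def using scalar_prod_self_nonneg by simp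

lemma vnorm_square: "(vnorm v)\<^sup>2 = v \<bullet> v"
  unfolding vnorm_def using scalar_prod_self_nonneg[of v] by simp

lemma vnorm_pos: "(v :: real vec) \<in> carrier_vec n \<Longrightarrow> v \<noteq> 0\<^sub>v n \<Longrightarrow> 0 < vnorm v"
  unfolding vnorm_def using scalar_prod_self_pos by simp

lemma vnorm_smult: "vnorm (c \<cdot>\<^sub>v v) = \<bar>c\<bar> * vnorm v"
proof -
  have "(c \<cdot>\<^sub>v v) \<bullet> (c \<cdot>\<^sub>v v) = c\<^sup>2 * (v \<bullet> v)"
    by (simp add: power2_eq_square)
  thus ?thesis unfolding vnorm_def by (simp add: real_sqrt_mult)
qed

lemma abs_scalar_prod_le_vnorm:
  assumes "dim_vec (u :: real vec) = dim_vec v"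
  shows "\<bar>u \<bullet> v\<bar> \<le> vnorm u * vnorm v"
proof -
  have "(u \<bullet> v)\<^sup>2 \<le> (u \<bullet> u) * (v \<bullet> v)"
    using Cauchy_Schwarz_ineq_sum[of "\<lambda>i. u $ i" "\<lambda>i. v $ i" "{0..<dim_vec v}"] assms
    by (simp add: scalar_prod_def power2_eq_square)
  hence "sqrt ((u \<bullet> v)\<^sup>2) \<le> sqrt ((u \<bullet> u) * (v \<bullet> v))"
    by (rule real_sqrt_le_mono)
  thus ?thesis unfolding vnorm_def by (simp add: real_sqrt_mult)
qed

lemma scalar_prod_div_vnorm_bounds:
  assumes "dim_vec (u :: real vec) = dim_vec v"
  shows "- 1 \<le> u \<bullet> v / (vnorm u * vnorm v)" "u \<bullet> v / (vnorm u * vnorm v) \<le> 1"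
proof -
  have "\<bar>u \<bullet> v / (vnorm u * vnorm v)\<bar> \<le> 1"
  proof (cases "vnorm u * vnorm v = 0")
    case False
    moreover have "0 \<le> vnorm u * vnorm v" by (simp add: vnorm_nonneg)
    ultimately have "0 < vnorm u * vnorm v" by linarith
    thus ?thesis
      using abs_scalar_prod_le_vnorm[OF assms] by (simp add: abs_divide divide_le_eq_1_pos)
  next
    case True
    then show ?thesis by (simp only: div_by_0 abs_zero zero_le_one)
  qed
  thus "- 1 \<le> u \<bullet> v / (vnorm u * vnorm v)" "u \<bullet> v / (vnorm u * vnorm v) \<le> 1"
    by linarith+
qed

lemma cos_vangle:
  "dim_vec (u :: real vec) = dim_vec v \<Longrightarrow> cos (vangle u v) = u \<bullet> v / (vnorm u * vnorm v)"
  unfolding vangle_def by (intro cos_arccos scalar_prod_div_vnorm_bounds)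

lemma vangle_bounds:
  assumes "dim_vec (u :: real vec) = dim_vec v"
  shows "0 \<le> vangle u v" "vangle u v \<le> pi"
  unfolding vangle_def using scalar_prod_div_vnorm_bounds[OF assms] by (simp_all only: arccos_lbound arccos_ubound)

lemma vangle_self:
  assumes "(v :: real vec) \<in> carrier_vec n" "v \<noteq> 0\<^sub>v n"
  shows "vangle v v = 0"
proof -
  have "vnorm v * vnorm v = v \<bullet> v" using vnorm_square[of v] by (simp add: power2_eq_square)
  thus ?thesis using scalar_prod_self_pos[OF assms] unfolding vangle_def by simp
qed

section \<open>The swap matrix\<close>

lemma smult_mat_mult_vec:
  "A \<in> carrier_mat nr nc \<Longrightarrow> v \<in> carrier_vec nc \<Longrightarrow>
   ((c :: 'a :: semiring_0) \<cdot>\<^sub>m A) *\<^sub>v v = c \<cdot>\<^sub>v (A *\<^sub>v v)"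
  by (intro eq_vecI) (auto simp: scalar_prod_def sum_distrib_left mult.assoc)

lemma outer_carrier:
  "a \<in> carrier_vec n \<Longrightarrow> b \<in> carrier_vec m \<Longrightarrow> outer a b \<in> carrier_mat n m"
  unfolding outer_def by simp

lemma outer_mult_vec:
  assumes "b \<in> carrier_vec n" "w \<in> carrier_vec n"
  shows "outer a b *\<^sub>v w = (b \<bullet> w) \<cdot>\<^sub>v a"
proof (rule eq_vecI)
  fix i assume "i < dim_vec ((b \<bullet> w) \<cdot>\<^sub>v a)"
  hence "(outer a b *\<^sub>v w) $ i = a $ i * (\<Sum>j\<in>{0..<n}. b $ j * w $ j)"
    using assms by (simp add: outer_def scalar_prod_def sum_distrib_left mult.assoc)
  also have "\<dots> = ((b \<bullet> w) \<cdot>\<^sub>v a) $ i"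
    using assms \<open>i < dim_vec ((b \<bullet> w) \<cdot>\<^sub>v a)\<close> by (simp add: scalar_prod_def)
  finally show "(outer a b *\<^sub>v w) $ i = ((b \<bullet> w) \<cdot>\<^sub>v a) $ i" .
qed (simp add: outer_def)

lemma unitv_carrier: "v \<in> carrier_vec n \<Longrightarrow> unitv v \<in> carrier_vec n"
  unfolding unitv_def by simp

lemma vnorm_smult_unitv:
  assumes "(v :: real vec) \<in> carrier_vec n" "v \<noteq> 0\<^sub>v n"
  shows "vnorm v \<cdot>\<^sub>v unitv v = v"
  using vnorm_pos[OF assms] unfolding unitv_def by (intro eq_vecI) auto

lemma unitv_scalar_prod_self:
  assumes "(v :: real vec) \<in> carrier_vec n" "v \<noteq> 0\<^sub>v n"
  shows "unitv v \<bullet> unitv v = 1"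
  using vnorm_pos[OF assms] vnorm_square[of v] scalar_prod_self_pos[OF assms]
  unfolding unitv_def by (simp add: power2_eq_square)

lemma unit_eq_of_scalar_prod_eq_1:
  assumes a: "(a :: real vec) \<in> carrier_vec n" and b: "b \<in> carrier_vec n"
    and "a \<bullet> a = 1" "b \<bullet> b = 1" "a \<bullet> b = 1"
  shows "a = b"
proof -
  have "(a - b) \<bullet> (a - b) = a \<bullet> a - 2 * (a \<bullet> b) + b \<bullet> b"
    using a b comm_scalar_prod[OF b a]
    by (simp add: minus_scalar_prod_distrib scalar_prod_minus_distrib)
  hence "a - b = 0\<^sub>v n"
    using assms scalar_prod_self_eq_0_iff[of "a - b" n] by simp
  show "a = b"
  proof (rule eq_vecI)
    fix i assume "i < dim_vec b"
    hence "i < n" using b by simp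
    thus "a $ i = b $ i"
      using \<open>a - b = 0\<^sub>v n\<close> a b
      by (metis eq_iff_diff_eq_0 index_minus_vec(1) index_zero_vec(1) carrier_vecD)
  qed (use a b in simp)
qed

lemma Mswap_carrier:
  assumes "x \<in> carrier_vec n" "y \<in> carrier_vec n"
  shows "Mswap x y \<in> carrier_mat n n"
proof -
  have "unitv x \<in> carrier_vec n" "unitv y \<in> carrier_vec n"
    using assms by (simp_all add: unitv_carrier)
  thus ?thesis unfolding Mswap_def Let_def
    by (simp add: outer_carrier minus_carrier_mat uminus_carrier_mat)
qed

lemma Mswap_mult_unitv:
  assumes x: "(x :: real vec) \<in> carrier_vec n" "x \<noteq> 0\<^sub>v n"
    and y: "y \<in> carrier_vec n" "y \<noteq> 0\<^sub>v n"
  shows "Mswap x y *\<^sub>v unitv y = unitv x"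
proof -
  define a b where "a = unitv x" and "b = unitv y"
  define c where "c = a \<bullet> b"
  have a: "a \<in> carrier_vec n" and b: "b \<in> carrier_vec n"
    using x y unitv_carrier unfolding a_def b_def by blast+
  have aa: "a \<bullet> a = 1" and bb: "b \<bullet> b = 1"
    using unitv_scalar_prod_self x y unfolding a_def b_def by auto
  have ba: "b \<bullet> a = c"
    unfolding c_def by (rule comm_scalar_prod[OF b a])
  have M: "Mswap x y = (if a = b then outer a a else if a = - b then - outer a a
      else (1 / (1 - c\<^sup>2)) \<cdot>\<^sub>m ((outer a b + outer b a) - c \<cdot>\<^sub>m (outer a a + outer b b)))"
    unfolding Mswap_def Let_def a_def b_def c_def ..
  have oa: "outer a a \<in> carrier_mat n n" "outer a b \<in> carrier_mat n n"
    and ob: "outer b a \<in> carrier_mat n n" "outer b b \<in> carrier_mat n n"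
    using a b outer_carrier by blast+
  consider "a = b" | "a \<noteq> b" "a = - b" | "a \<noteq> b" "a \<noteq> - b" by blast
  then have "Mswap x y *\<^sub>v b = a"
  proof cases
    case 1
    then show ?thesis using M b bb outer_mult_vec[OF b b] by simp
  next
    case 2
    then have "c = - 1" using b bb unfolding c_def by simp
    have "Mswap x y *\<^sub>v b = - (c \<cdot>\<^sub>v a)"
      using 2 M oa(1) b outer_mult_vec[OF a b] unfolding c_def by simp
    also have "\<dots> = a" using \<open>c = - 1\<close> a by (intro eq_vecI) auto
    finally show ?thesis .
  next
    case 3
    have "c \<noteq> 1" using unit_eq_of_scalar_prod_eq_1[OF a b aa bb] 3 unfolding c_def by blast
    moreover have "c \<noteq> - 1"
      using unit_eq_of_scalar_prod_eq_1[of a n "- b"] a b aa bb 3 unfolding c_def by auto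
    ultimately have c2: "1 - c\<^sup>2 \<noteq> 0" by (simp add: power2_eq_1_iff)
    have "(outer a b + outer b a) *\<^sub>v b = a + c \<cdot>\<^sub>v b"
      using oa ob a b bb ba by (simp add: add_mult_distrib_mat_vec outer_mult_vec[of _ n] c_def)
    moreover have "(outer a a + outer b b) *\<^sub>v b = c \<cdot>\<^sub>v a + b"
      using oa ob a b bb ba by (simp add: add_mult_distrib_mat_vec outer_mult_vec[of _ n] c_def)
    ultimately have "Mswap x y *\<^sub>v b = (1 / (1 - c\<^sup>2)) \<cdot>\<^sub>v ((a + c \<cdot>\<^sub>v b) - c \<cdot>\<^sub>v (c \<cdot>\<^sub>v a + b))"
      using 3 M oa ob b
      by (simp add: smult_mat_mult_vec[of _ n n] minus_mult_distrib_mat_vec[of _ n n]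
          minus_carrier_mat)
    also have "(a + c \<cdot>\<^sub>v b) - c \<cdot>\<^sub>v (c \<cdot>\<^sub>v a + b) = (1 - c\<^sup>2) \<cdot>\<^sub>v a"
      using a b by (intro eq_vecI) (simp_all add: algebra_simps power2_eq_square)
    finally show ?thesis using c2 by (simp add: smult_smult_assoc)
  qed
  thus ?thesis unfolding a_def b_def .
qed

lemma Mswap_bilinear:
  assumes x: "(x :: real vec) \<in> carrier_vec n" "x \<noteq> 0\<^sub>v n"
    and y: "y \<in> carrier_vec n" "y \<noteq> 0\<^sub>v n"
  shows "(Mswap x y *\<^sub>v y) \<bullet> x = vnorm x * vnorm y"
proof -
  have ux: "unitv x \<in> carrier_vec n" and uy: "unitv y \<in> carrier_vec n"
    using x y unitv_carrier by blast+
  have "Mswap x y *\<^sub>v y = Mswap x y *\<^sub>v (vnorm y \<cdot>\<^sub>v unitv y)"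
    by (simp only: vnorm_smult_unitv[OF y])
  also have "\<dots> = vnorm y \<cdot>\<^sub>v unitv x"
    using mult_mat_vec[OF Mswap_carrier[OF x(1) y(1)] uy] Mswap_mult_unitv[OF x y] by simp
  finally have "Mswap x y *\<^sub>v y = vnorm y \<cdot>\<^sub>v unitv x" .
  moreover have "unitv x \<bullet> x = vnorm x"
    using vnorm_smult_unitv[OF x] unitv_scalar_prod_self[OF x] ux
    by (metis mult.right_neutral scalar_prod_smult_right carrier_vecD)
  ultimately show ?thesis using ux x by simp
qed

section \<open>The angle map phi and the matrix Phi\<close>

lemma phi_numerator_bounds_half:
  assumes "0 \<le> t" "t \<le> pi / 2"
  shows "0 \<le> (pi - 2 * t) * cos t + 2 * sin t" "(pi - 2 * t) * cos t + 2 * sin t \<le> pi"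
proof -
  have "0 \<le> cos t" "0 \<le> sin t" using assms by (auto intro!: cos_ge_zero sin_ge_zero)
  thus "0 \<le> (pi - 2 * t) * cos t + 2 * sin t" using assms by simp
  let ?g = "\<lambda>t. (pi - 2 * t) * cos t + 2 * sin t"
  have "?g t \<le> ?g 0"
  proof (rule DERIV_nonpos_imp_nonincreasing[OF assms(1)])
    fix s assume s: "0 \<le> s" "s \<le> t"
    have "DERIV ?g s :> - ((pi - 2 * s) * sin s)"
      by (auto intro!: derivative_eq_intros simp: algebra_simps)
    moreover have "0 \<le> (pi - 2 * s) * sin s" using s assms by (simp add: sin_ge_zero)
    ultimately show "\<exists>y. DERIV ?g s :> y \<and> y \<le> 0" by (intro exI conjI) auto
  qed
  thus "?g t \<le> pi" by simp
qed

lemma phi_numerator_bounds: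
  assumes "0 \<le> t" "t \<le> pi"
  shows "0 \<le> (pi - 2 * t) * cos t + 2 * sin t" "(pi - 2 * t) * cos t + 2 * sin t \<le> pi"
proof -
  have "(pi - 2 * (pi - t)) * cos (pi - t) + 2 * sin (pi - t) = (pi - 2 * t) * cos t + 2 * sin t"
    by (simp add: algebra_simps)
  hence "0 \<le> (pi - 2 * t) * cos t + 2 * sin t \<and> (pi - 2 * t) * cos t + 2 * sin t \<le> pi"
    using phi_numerator_bounds_half[of t] phi_numerator_bounds_half[of "pi - t"] assms
    by (cases "t \<le> pi / 2") auto
  thus "0 \<le> (pi - 2 * t) * cos t + 2 * sin t" "(pi - 2 * t) * cos t + 2 * sin t \<le> pi"
    by auto
qed

lemma cos_phi:
  assumes "0 \<le> t" "t \<le> pi"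
  shows "cos (phi t) = ((pi - 2 * t) * cos t + 2 * sin t) / pi"
  unfolding phi_def using phi_numerator_bounds[OF assms]
  by (intro cos_arccos) (simp_all add: divide_le_eq_1_pos order_trans[of "- 1" 0])

lemma phi_zero [simp]: "phi 0 = 0"
  unfolding phi_def by simp

lemma Phi_bilinear:
  assumes x: "(x :: real vec) \<in> carrier_vec n" "x \<noteq> 0\<^sub>v n"
    and y: "y \<in> carrier_vec n" "y \<noteq> 0\<^sub>v n"
  shows "(Phi n x y *\<^sub>v y) \<bullet> x = vnorm x * vnorm y * cos (phi (vangle x y))"
proof -
  define t where "t = vangle x y"
  have t: "0 \<le> t" "t \<le> pi" using vangle_bounds[of x y] x y unfolding t_def by auto
  have M: "Mswap x y \<in> carrier_mat n n" by (rule Mswap_carrier[OF x(1) y(1)])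
  have yx: "y \<bullet> x = vnorm x * vnorm y * cos t"
    using cos_vangle[of x y] vnorm_pos[OF x] vnorm_pos[OF y] comm_scalar_prod[OF y(1) x(1)] x y
    unfolding t_def by simp
  have "(Phi n x y *\<^sub>v y) \<bullet> x
      = (pi - 2 * t) / pi * (y \<bullet> x) + 2 * sin t / pi * ((Mswap x y *\<^sub>v y) \<bullet> x)"
    using x y M unfolding Phi_def Let_def t_def
    by (simp add: add_mult_distrib_mat_vec[of _ n n] smult_mat_mult_vec[of _ n n]
        add_scalar_prod_distrib[of _ n])
  also have "\<dots> = vnorm x * vnorm y * (((pi - 2 * t) * cos t + 2 * sin t) / pi)"
    unfolding yx Mswap_bilinear[OF x y] by (simp add: field_simps)
  also have "\<dots> = vnorm x * vnorm y * cos (phi t)"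
    using cos_phi[OF t] by simp
  finally show ?thesis unfolding t_def .
qed

section \<open>The network\<close>

lemma relu_carrier: "relu v \<in> carrier_vec (dim_vec v)"
  unfolding relu_def by simp

lemma net_Nil [simp]: "net [] x = x"
  unfolding net_def by simp

lemma net_Cons [simp]: "net (W # Ws) x = net Ws (relu (W *\<^sub>v x))"
  unfolding net_def by simp

lemma opnorm_smult_one_mat:
  assumes "0 < n"
  shows "opnorm (c \<cdot>\<^sub>m 1\<^sub>m n) = \<bar>c\<bar>"
proof -
  let ?S = "{vnorm ((c \<cdot>\<^sub>m 1\<^sub>m n) *\<^sub>v v) | v. v \<in> carrier_vec n \<and> vnorm v \<le> 1}"
  have scale: "(c \<cdot>\<^sub>m 1\<^sub>m n) *\<^sub>v v = c \<cdot>\<^sub>v v" if "v \<in> carrier_vec n" for v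
    using smult_mat_mult_vec[of "1\<^sub>m n" n n v c] that by simp
  have "Sup ?S = \<bar>c\<bar>"
  proof (rule cSup_eq_maximum)
    have "vnorm (unit_vec n 0) = 1" using assms unfolding vnorm_def by simp
    thus "\<bar>c\<bar> \<in> ?S"
      using scale[of "unit_vec n 0"] by (auto simp: vnorm_smult intro!: exI[of _ "unit_vec n 0"])
  next
    fix r assume "r \<in> ?S"
    thus "r \<le> \<bar>c\<bar>" using scale by (auto simp: vnorm_smult mult_left_le)
  qed
  thus ?thesis unfolding opnorm_def by simp
qed

lemma Wplus_eq_0_if_relu_eq_0:
  assumes W: "W \<in> carrier_mat a b" and relu: "relu (W *\<^sub>v x) = 0\<^sub>v a"
  shows "Wplus W x = 0\<^sub>m a b"
proof (rule eq_matI)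
  fix i j assume ij: "i < dim_row (0\<^sub>m a b)" "j < dim_col (0\<^sub>m a b)"
  have "relu (W *\<^sub>v x) $ i = 0" using relu ij by simp
  hence "\<not> 0 < (W *\<^sub>v x) $ i" using ij W by (simp add: relu_def)
  thus "Wplus W x $$ (i, j) = 0\<^sub>m a b $$ (i, j)" using ij W by (simp add: Wplus_def)
qed (use W in \<open>simp_all add: Wplus_def\<close>)

lemma relu_layer_nonzero:
  assumes W: "W \<in> carrier_mat a b" and wdc: "WDC W eps" and eps: "eps < 1 / 2"
    and x: "x \<in> carrier_vec b" "x \<noteq> 0\<^sub>v b"
  shows "relu (W *\<^sub>v x) \<noteq> 0\<^sub>v a"
proof
  assume "relu (W *\<^sub>v x) = 0\<^sub>v a"
  hence Wx: "Wplus W x = 0\<^sub>m a b" by (rule Wplus_eq_0_if_relu_eq_0[OF W])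
  have "0 < b"
  proof (rule ccontr)
    assume "\<not> 0 < b"
    hence "x = 0\<^sub>v b" using x(1) by (intro eq_vecI) auto
    with x(2) show False by simp
  qed
  have "opnorm ((Wplus W x)\<^sup>T * Wplus W x - ((pi - vangle x x) / (2 * pi) \<cdot>\<^sub>m 1\<^sub>m (dim_col W)
      + (sin (vangle x x) / (2 * pi)) \<cdot>\<^sub>m Mswap x x)) \<le> eps"
    using wdc x W unfolding WDC_def Let_def by auto
  moreover have "(Wplus W x)\<^sup>T * Wplus W x - ((pi - vangle x x) / (2 * pi) \<cdot>\<^sub>m 1\<^sub>m (dim_col W)
      + (sin (vangle x x) / (2 * pi)) \<cdot>\<^sub>m Mswap x x) = (- 1 / 2) \<cdot>\<^sub>m 1\<^sub>m b"
    using W Mswap_carrier[OF x(1) x(1)] unfolding Wx vangle_self[OF x]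
    by (intro eq_matI) (auto simp: scalar_prod_def)
  ultimately show False using opnorm_smult_one_mat[OF \<open>0 < b\<close>, of "- 1 / 2"] eps by simp
qed

lemma layer_dims_Cons:
  assumes "length ns = length (W # Ws) + 1"
    and "\<forall>i < length (W # Ws). (W # Ws) ! i \<in> carrier_mat (ns ! (i + 1)) (ns ! i)"
  obtains n0 ns' where "ns = n0 # ns'" "length ns' = length Ws + 1"
    and "W \<in> carrier_mat (ns' ! 0) n0"
    and "\<forall>i < length Ws. Ws ! i \<in> carrier_mat (ns' ! (i + 1)) (ns' ! i)"
proof -
  obtain n0 ns' where ns: "ns = n0 # ns'" using assms(1) by (cases ns) auto
  show thesis
  proof (rule that[OF ns])
    show "length ns' = length Ws + 1" using assms(1) ns by simp
    show "W \<in> carrier_mat (ns' ! 0) n0" using assms(2)[rule_format, of 0] ns by simp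
    show "\<forall>i < length Ws. Ws ! i \<in> carrier_mat (ns' ! (i + 1)) (ns' ! i)"
      using assms(2)[rule_format, of "Suc _"] ns by simp
  qed
qed

lemma net_carrier:
  assumes "length ns = length Ws + 1"
    and "\<forall>i < length Ws. Ws ! i \<in> carrier_mat (ns ! (i + 1)) (ns ! i)"
    and "x \<in> carrier_vec (ns ! 0)"
  shows "net Ws x \<in> carrier_vec (ns ! length Ws)"
  using assms
proof (induction Ws arbitrary: ns x)
  case (Cons W Ws)
  obtain n0 ns' where ns: "ns = n0 # ns'" "length ns' = length Ws + 1"
    and W: "W \<in> carrier_mat (ns' ! 0) n0"
    and dims: "\<forall>i < length Ws. Ws ! i \<in> carrier_mat (ns' ! (i + 1)) (ns' ! i)"
    by (rule layer_dims_Cons[OF Cons.prems(1,2)])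
  have "relu (W *\<^sub>v x) \<in> carrier_vec (ns' ! 0)" using relu_carrier[of "W *\<^sub>v x"] W by simp
  from Cons.IH[OF ns(2) dims this] show ?case using ns(1) by simp
qed simp

lemma net_zero:
  assumes "length ns = length Ws + 1"
    and "\<forall>i < length Ws. Ws ! i \<in> carrier_mat (ns ! (i + 1)) (ns ! i)"
  shows "net Ws (0\<^sub>v (ns ! 0)) = 0\<^sub>v (ns ! length Ws)"
  using assms
proof (induction Ws arbitrary: ns)
  case (Cons W Ws)
  obtain n0 ns' where ns: "ns = n0 # ns'" "length ns' = length Ws + 1"
    and W: "W \<in> carrier_mat (ns' ! 0) n0"
    and dims: "\<forall>i < length Ws. Ws ! i \<in> carrier_mat (ns' ! (i + 1)) (ns' ! i)"
    by (rule layer_dims_Cons[OF Cons.prems(1,2)])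
  have "relu (W *\<^sub>v 0\<^sub>v n0) = 0\<^sub>v (ns' ! 0)"
    using W unfolding relu_def by (intro eq_vecI) auto
  with Cons.IH[OF ns(2) dims] show ?case using ns(1) by simp
qed simp

lemma net_nonzero:
  assumes "length ns = length Ws + 1"
    and "\<forall>i < length Ws. Ws ! i \<in> carrier_mat (ns ! (i + 1)) (ns ! i)"
    and "\<forall>i < length Ws. WDC (Ws ! i) eps" and "eps < 1 / 2"
    and "x \<in> carrier_vec (ns ! 0)" "x \<noteq> 0\<^sub>v (ns ! 0)"
  shows "net Ws x \<noteq> 0\<^sub>v (ns ! length Ws)"
  using assms
proof (induction Ws arbitrary: ns x)
  case (Cons W Ws)
  obtain n0 ns' where ns: "ns = n0 # ns'" "length ns' = length Ws + 1"
    and W: "W \<in> carrier_mat (ns' ! 0) n0"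
    and dims: "\<forall>i < length Ws. Ws ! i \<in> carrier_mat (ns' ! (i + 1)) (ns' ! i)"
    by (rule layer_dims_Cons[OF Cons.prems(1,2)])
  have wdc: "WDC W eps" "\<forall>i < length Ws. WDC (Ws ! i) eps"
    using Cons.prems(3) by auto
  have "relu (W *\<^sub>v x) \<in> carrier_vec (ns' ! 0)" using relu_carrier[of "W *\<^sub>v x"] W by simp
  moreover have "relu (W *\<^sub>v x) \<noteq> 0\<^sub>v (ns' ! 0)"
    using relu_layer_nonzero[OF W wdc(1) Cons.prems(4)] Cons.prems(5,6) ns(1) by simp
  ultimately show ?case using Cons.IH[OF ns(2) dims wdc(2) Cons.prems(4)] ns(1) by simp
qed simp

section \<open>Angle distortion under the RRCP\<close>

lemma Asgn_carrier: "A \<in> carrier_mat m n \<Longrightarrow> Asgn A z \<in> carrier_mat m n"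
  unfolding Asgn_def by simp

lemma Phi_carrier: "x \<in> carrier_vec n \<Longrightarrow> y \<in> carrier_vec n \<Longrightarrow> Phi n x y \<in> carrier_mat n n"
  unfolding Phi_def Let_def using Mswap_carrier by auto

lemma RRCP_scalar_prod:
  assumes rrcp: "RRCP A Ws k n eps" and A: "A \<in> carrier_mat m n"
    and x: "x \<in> carrier_vec k" and y: "y \<in> carrier_vec k"
    and Gx: "net Ws x \<in> carrier_vec n" "net Ws x \<noteq> 0\<^sub>v n"
    and Gy: "net Ws y \<in> carrier_vec n" "net Ws y \<noteq> 0\<^sub>v n"
    and net_0: "net Ws (0\<^sub>v k) = 0\<^sub>v n"
  shows "\<bar>(Asgn A (net Ws x) *\<^sub>v net Ws x) \<bullet> (Asgn A (net Ws y) *\<^sub>v net Ws y)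
      - vnorm (net Ws x) * vnorm (net Ws y) * cos (phi (vangle (net Ws x) (net Ws y)))\<bar>
    \<le> LL * eps * (vnorm (net Ws x) * vnorm (net Ws y))"
proof -
  define gx gy where "gx = net Ws x" and "gy = net Ws y"
  define Ax Ay where "Ax = Asgn A gx" and "Ay = Asgn A gy"
  have gx: "gx \<in> carrier_vec n" "gx \<noteq> 0\<^sub>v n" and gy: "gy \<in> carrier_vec n" "gy \<noteq> 0\<^sub>v n"
    using Gx Gy unfolding gx_def gy_def by auto
  have Ax: "Ax \<in> carrier_mat m n" and Ay: "Ay \<in> carrier_mat m n"
    using Asgn_carrier[OF A] unfolding Ax_def Ay_def by auto
  have P: "Phi n gx gy \<in> carrier_mat n n" by (rule Phi_carrier[OF gx(1) gy(1)])
  have "\<bar>((Ax\<^sup>T * Ay - Phi n gx gy) *\<^sub>v gy) \<bullet> gx\<bar> \<le> LL * eps * vnorm gy * vnorm gx"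
    using rrcp[unfolded RRCP_def, rule_format, of x y y "0\<^sub>v k" x "0\<^sub>v k"] x y net_0 gx gy
    unfolding gx_def gy_def Ax_def Ay_def by simp
  moreover have "((Ax\<^sup>T * Ay - Phi n gx gy) *\<^sub>v gy) \<bullet> gx
      = (Ax\<^sup>T *\<^sub>v (Ay *\<^sub>v gy)) \<bullet> gx - (Phi n gx gy *\<^sub>v gy) \<bullet> gx"
    using Ax Ay P gx gy
    by (simp add: minus_mult_distrib_mat_vec[of _ n n] minus_scalar_prod_distrib[of _ n])
  moreover have "(Ax\<^sup>T *\<^sub>v (Ay *\<^sub>v gy)) \<bullet> gx = (Ax *\<^sub>v gx) \<bullet> (Ay *\<^sub>v gy)"
    using transpose_vec_mult_scalar[OF Ax gx(1), of "Ay *\<^sub>v gy"] Ax Ay gx gy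
      comm_scalar_prod[of "Ay *\<^sub>v gy" m "Ax *\<^sub>v gx"] by simp
  ultimately show ?thesis
    using Phi_bilinear[OF gx gy] unfolding gx_def gy_def Ax_def Ay_def by (simp add: ac_simps)
qed

lemma cos_vangle_perturbation:
  fixes u v :: "real vec"
  assumes dim: "dim_vec u = dim_vec v" and a: "0 < a" and b: "0 < b"
    and d: "0 \<le> d" "d \<le> 1 / 2" and f: "\<bar>f\<bar> \<le> 1"
    and uu: "\<bar>u \<bullet> u - a\<^sup>2\<bar> \<le> d * a\<^sup>2" and vv: "\<bar>v \<bullet> v - b\<^sup>2\<bar> \<le> d * b\<^sup>2"
    and uv: "\<bar>u \<bullet> v - a * b * f\<bar> \<le> d * (a * b)"
  shows "\<bar>cos (vangle u v) - f\<bar> \<le> 4 * d"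
proof -
  define Q where "Q = vnorm u * vnorm v"
  have Q0: "0 \<le> Q" unfolding Q_def by (simp add: vnorm_nonneg)
  have Q2: "Q\<^sup>2 = (u \<bullet> u) * (v \<bullet> v)"
    unfolding Q_def power_mult_distrib vnorm_square ..
  have uu': "(1 - d) * a\<^sup>2 \<le> u \<bullet> u" "u \<bullet> u \<le> (1 + d) * a\<^sup>2"
    and vv': "(1 - d) * b\<^sup>2 \<le> v \<bullet> v" "v \<bullet> v \<le> (1 + d) * b\<^sup>2"
    using uu vv by (auto simp: abs_le_iff algebra_simps)
  have "((1 - d) * (a * b))\<^sup>2 = ((1 - d) * a\<^sup>2) * ((1 - d) * b\<^sup>2)"
    by (simp add: power2_eq_square)
  also have "\<dots> \<le> Q\<^sup>2"
    unfolding Q2 using uu'(1) vv'(1) d scalar_prod_self_nonneg[of u] by (intro mult_mono) auto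
  finally have Qlo: "(1 - d) * (a * b) \<le> Q"
    by (rule power2_le_imp_le[OF _ Q0])
  have "Q\<^sup>2 \<le> ((1 + d) * a\<^sup>2) * ((1 + d) * b\<^sup>2)"
    unfolding Q2 using uu'(2) vv'(2) d scalar_prod_self_nonneg[of u] scalar_prod_self_nonneg[of v]
    by (intro mult_mono) auto
  also have "\<dots> = ((1 + d) * (a * b))\<^sup>2"
    by (simp add: power2_eq_square)
  finally have Qhi: "Q \<le> (1 + d) * (a * b)"
    by (rule power2_le_imp_le) (use a b d in simp)
  have ab: "0 < a * b" using a b by simp
  have "0 < (1 - d) * (a * b)" using ab d by simp
  hence Qpos: "0 < Q" using Qlo by linarith
  have dist: "\<bar>a * b - Q\<bar> \<le> d * (a * b)"
    using Qlo Qhi by (simp add: abs_le_iff algebra_simps)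
  have "u \<bullet> v - Q * f = (u \<bullet> v - a * b * f) + (a * b - Q) * f"
    by (simp add: algebra_simps)
  hence "\<bar>u \<bullet> v - Q * f\<bar> \<le> \<bar>u \<bullet> v - a * b * f\<bar> + \<bar>a * b - Q\<bar> * \<bar>f\<bar>"
    using abs_triangle_ineq[of "u \<bullet> v - a * b * f" "(a * b - Q) * f"] by (simp add: abs_mult)
  also have "\<bar>a * b - Q\<bar> * \<bar>f\<bar> \<le> \<bar>a * b - Q\<bar>"
    using f by (simp add: mult_left_le)
  finally have num: "\<bar>u \<bullet> v - Q * f\<bar> \<le> 2 * d * (a * b)"
    using uv dist by linarith
  have "\<bar>cos (vangle u v) - f\<bar> = \<bar>u \<bullet> v - Q * f\<bar> / Q"
  proof -
    have "u \<bullet> v / Q - f = (u \<bullet> v - Q * f) / Q" using Qpos by (simp add: field_simps)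
    thus ?thesis using cos_vangle[OF dim] Qpos unfolding Q_def[symmetric] by simp
  qed
  also have "\<dots> \<le> 2 * d * (a * b) / ((1 - d) * (a * b))"
    using num Qlo d ab by (intro frac_le) auto
  also have "\<dots> = 2 * d / (1 - d)" using a b by simp
  also have "\<dots> \<le> 4 * d" using d by (simp add: divide_le_eq algebra_simps mult_left_le)
  finally show ?thesis .
qed

lemma nonzero_if_scalar_prod_self_close:
  assumes "(u :: real vec) \<in> carrier_vec m" "\<bar>u \<bullet> u - a\<^sup>2\<bar> \<le> d * a\<^sup>2" "d < 1" "a \<noteq> 0"
  shows "u \<noteq> 0\<^sub>v m"
proof
  assume "u = 0\<^sub>v m"
  hence "a\<^sup>2 \<le> d * a\<^sup>2" using assms(2) by simp
  moreover have "d * a\<^sup>2 < a\<^sup>2" using assms(3,4) by simp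
  ultimately show False by linarith
qed

lemma RRCP_angle_distortion:
  assumes rrcp: "RRCP A Ws k n eps" and A: "A \<in> carrier_mat m n"
    and LL_eps: "0 \<le> LL * eps" "LL * eps \<le> 1 / 2"
    and x: "x \<in> carrier_vec k" and y: "y \<in> carrier_vec k"
    and Gx: "net Ws x \<in> carrier_vec n" "net Ws x \<noteq> 0\<^sub>v n"
    and Gy: "net Ws y \<in> carrier_vec n" "net Ws y \<noteq> 0\<^sub>v n"
    and net_0: "net Ws (0\<^sub>v k) = 0\<^sub>v n"
  defines "u \<equiv> Asgn A (net Ws x) *\<^sub>v net Ws x" and "v \<equiv> Asgn A (net Ws y) *\<^sub>v net Ws y"
  shows "u \<noteq> 0\<^sub>v m" "v \<noteq> 0\<^sub>v m"
    and "\<bar>cos (vangle u v) - cos (phi (vangle (net Ws x) (net Ws y)))\<bar> \<le> 4 * (LL * eps)"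
proof -
  have u: "u \<in> carrier_vec m" and v: "v \<in> carrier_vec m"
    unfolding u_def v_def
    by (rule mult_mat_vec_carrier[OF Asgn_carrier[OF A] Gx(1)],
        rule mult_mat_vec_carrier[OF Asgn_carrier[OF A] Gy(1)])
  have uu: "\<bar>u \<bullet> u - (vnorm (net Ws x))\<^sup>2\<bar> \<le> LL * eps * (vnorm (net Ws x))\<^sup>2"
    using RRCP_scalar_prod[OF rrcp A x x Gx Gx net_0] vangle_self[OF Gx]
    unfolding u_def by (simp add: power2_eq_square)
  have vv: "\<bar>v \<bullet> v - (vnorm (net Ws y))\<^sup>2\<bar> \<le> LL * eps * (vnorm (net Ws y))\<^sup>2"
    using RRCP_scalar_prod[OF rrcp A y y Gy Gy net_0] vangle_self[OF Gy]
    unfolding v_def by (simp add: power2_eq_square)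
  have uv: "\<bar>u \<bullet> v - vnorm (net Ws x) * vnorm (net Ws y) * cos (phi (vangle (net Ws x) (net Ws y)))\<bar>
      \<le> LL * eps * (vnorm (net Ws x) * vnorm (net Ws y))"
    using RRCP_scalar_prod[OF rrcp A x y Gx Gy net_0] unfolding u_def v_def .
  have nx: "0 < vnorm (net Ws x)" and ny: "0 < vnorm (net Ws y)"
    using vnorm_pos Gx Gy by auto
  show "u \<noteq> 0\<^sub>v m" "v \<noteq> 0\<^sub>v m"
    using nonzero_if_scalar_prod_self_close[OF u uu] nonzero_if_scalar_prod_self_close[OF v vv]
      LL_eps nx ny by simp_all
  show "\<bar>cos (vangle u v) - cos (phi (vangle (net Ws x) (net Ws y)))\<bar> \<le> 4 * (LL * eps)"
    using cos_vangle_perturbation[OF _ nx ny LL_eps abs_cos_le_one uu vv uv] u v by simp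
qed

theorem lemma15:
  fixes Ws :: "real mat list" and ns :: "nat list" and A :: "real mat"
    and k n m :: nat and eps :: real
  assumes eps_pos: "0 < eps" and eps_small: "eps < 1 / (4 * LL)"
    and d_pos: "Ws \<noteq> []"
    and ns_len: "length ns = length Ws + 1"
    and ns_first: "ns ! 0 = k" and ns_last: "ns ! length Ws = n"
    and ns_incr: "\<forall>i < length Ws. ns ! i < ns ! (i + 1)"
    and Ws_dim: "\<forall>i < length Ws. Ws ! i \<in> carrier_mat (ns ! (i + 1)) (ns ! i)"
    and A_dim: "A \<in> carrier_mat m n"
    and rrcp: "RRCP A Ws k n eps"
    and wdc: "\<forall>i < length Ws. WDC (Ws ! i) eps"
  shows "\<forall>x y. x \<in> carrier_vec k \<and> y \<in> carrier_vec k \<and>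
            x \<noteq> 0\<^sub>v k \<and> y \<noteq> 0\<^sub>v k \<longrightarrow>
           (let gx = net Ws x; gy = net Ws y;
                u = Asgn A gx *\<^sub>v gx; v = Asgn A gy *\<^sub>v gy in
            u \<noteq> 0\<^sub>v m \<and> v \<noteq> 0\<^sub>v m \<and>
            \<bar>cos (vangle u v) - cos (phi (vangle gx gy))\<bar> \<le> 4 * LL * eps)"
proof (intro allI impI)
  fix x y :: "real vec"
  assume "x \<in> carrier_vec k \<and> y \<in> carrier_vec k \<and> x \<noteq> 0\<^sub>v k \<and> y \<noteq> 0\<^sub>v k"
  hence x: "x \<in> carrier_vec k" "x \<noteq> 0\<^sub>v k" and y: "y \<in> carrier_vec k" "y \<noteq> 0\<^sub>v k" by auto
  have eps_half: "eps < 1 / 2" and LL_eps: "0 \<le> LL * eps" "LL * eps \<le> 1 / 2"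
    using eps_pos eps_small unfolding LL_def by auto
  have net_0: "net Ws (0\<^sub>v k) = 0\<^sub>v n"
    using net_zero[OF ns_len Ws_dim] unfolding ns_first ns_last .
  have G: "net Ws z \<in> carrier_vec n" "net Ws z \<noteq> 0\<^sub>v n" if "z \<in> carrier_vec k" "z \<noteq> 0\<^sub>v k" for z
    using net_carrier[OF ns_len Ws_dim] net_nonzero[OF ns_len Ws_dim wdc eps_half] that
    unfolding ns_first ns_last by auto
  show "let gx = net Ws x; gy = net Ws y; u = Asgn A gx *\<^sub>v gx; v = Asgn A gy *\<^sub>v gy in
      u \<noteq> 0\<^sub>v m \<and> v \<noteq> 0\<^sub>v m \<and> \<bar>cos (vangle u v) - cos (phi (vangle gx gy))\<bar> \<le> 4 * LL * eps"
    using RRCP_angle_distortion[OF rrcp A_dim LL_eps x(1) y(1) G[OF x] G[OF y] net_0]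
    unfolding Let_def by (simp add: mult.assoc)
qed

end
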